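(* Let $(X,\tau)$ be a topological space, $\mathcal{V}\in T(\tau)$, $\mathcal{B}=\mathcal{B}(\mathcal{V}_\omega)$, and let $\alpha$ be an interior preserving open cover of $X$ with $U_\alpha\in\mathcal{V}$. Then every $A\in\alpha$ belongs to $\mathcal{B}$.
   Context: An open cover $\alpha$ of $X$ is interior preserving if for every $x\in X$ the set $\bigcap\{N\in\alpha:x\in N\}$ is open; then $U_\alpha\subseteq X\times X$ is the relation with $U_\alpha(x)=\bigcap\{N\in\alpha:x\in N\}$ (a transitive relation). $T(\tau)$ is the set of compatible transitive quasi-uniformities on $(X,\tau)$. For a quasi-uniformity $\mathcal{V}$, $\mathcal{V}_\omega$ is the coarsest quasi-uniformity inducing the same quasi-proximity as $\mathcal{V}$. For $N\subseteq X$, $U_N=(N\times N)\cup((X\setminus N)\times X)$, and for a compatible quasi-uniformity $\mathcal{W}$, $\mathcal{B}(\mathcal{W})=\{N\in\tau:U_N\in\mathcal{W}\}$. *)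

theory Defs
  imports "HOL-Analysis.Analysis"
begin

definition quasi_uniformity :: "'a set \<Rightarrow> ('a \<times> 'a) set set \<Rightarrow> bool" where
  "quasi_uniformity X \<U> \<longleftrightarrow>
     \<U> \<noteq> {} \<and>
     (\<forall>U\<in>\<U>. Id_on X \<subseteq> U \<and> U \<subseteq> X \<times> X) \<and>
     (\<forall>U V. U \<in> \<U> \<and> U \<subseteq> V \<and> V \<subseteq> X \<times> X \<longrightarrow> V \<in> \<U>) \<and>
     (\<forall>U\<in>\<U>. \<forall>V\<in>\<U>. U \<inter> V \<in> \<U>) \<and>
     (\<forall>U\<in>\<U>. \<exists>V\<in>\<U>. V O V \<subseteq> U)"

definition qu_open :: "'a set \<Rightarrow> ('a \<times> 'a) set set \<Rightarrow> 'a set \<Rightarrow> bool" where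
  "qu_open X \<U> G \<longleftrightarrow> G \<subseteq> X \<and> (\<forall>x\<in>G. \<exists>U\<in>\<U>. U `` {x} \<subseteq> G)"

definition compatible_qu :: "'a topology \<Rightarrow> ('a \<times> 'a) set set \<Rightarrow> bool" where
  "compatible_qu \<tau> \<U> \<longleftrightarrow> quasi_uniformity (topspace \<tau>) \<U> \<and>
     (\<forall>G. openin \<tau> G \<longleftrightarrow> qu_open (topspace \<tau>) \<U> G)"

definition transitive_qu :: "('a \<times> 'a) set set \<Rightarrow> bool" where
  "transitive_qu \<U> \<longleftrightarrow> (\<forall>U\<in>\<U>. \<exists>V\<in>\<U>. trans V \<and> V \<subseteq> U)"

definition T_qu :: "'a topology \<Rightarrow> ('a \<times> 'a) set set set" where
  "T_qu \<tau> = {\<U>. compatible_qu \<tau> \<U> \<and> transitive_qu \<U>}"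

definition qprox :: "'a set \<Rightarrow> ('a \<times> 'a) set set \<Rightarrow> ('a set \<times> 'a set) set" where
  "qprox X \<U> = {(A, B). A \<subseteq> X \<and> B \<subseteq> X \<and> (\<forall>U\<in>\<U>. U `` A \<inter> B \<noteq> {})}"

definition V_omega :: "'a set \<Rightarrow> ('a \<times> 'a) set set \<Rightarrow> ('a \<times> 'a) set set" where
  "V_omega X \<V> = (THE \<W>. quasi_uniformity X \<W> \<and> qprox X \<W> = qprox X \<V> \<and>
      (\<forall>\<W>'. quasi_uniformity X \<W>' \<and> qprox X \<W>' = qprox X \<V> \<longrightarrow> \<W> \<subseteq> \<W>'))"

definition U_set :: "'a set \<Rightarrow> 'a set \<Rightarrow> ('a \<times> 'a) set" where
  "U_set X N = (N \<times> N) \<union> ((X - N) \<times> X)"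

definition B_qu :: "'a topology \<Rightarrow> ('a \<times> 'a) set set \<Rightarrow> 'a set set" where
  "B_qu \<tau> \<W> = {N. openin \<tau> N \<and> U_set (topspace \<tau>) N \<in> \<W>}"

definition interior_preserving_open_cover :: "'a topology \<Rightarrow> 'a set set \<Rightarrow> bool" where
  "interior_preserving_open_cover \<tau> \<alpha> \<longleftrightarrow>
     (\<forall>N\<in>\<alpha>. openin \<tau> N) \<and> \<Union>\<alpha> = topspace \<tau> \<and>
     (\<forall>x\<in>topspace \<tau>. openin \<tau> (\<Inter>{N\<in>\<alpha>. x \<in> N}))"

definition U_cover :: "'a set \<Rightarrow> 'a set set \<Rightarrow> ('a \<times> 'a) set" where
  "U_cover X \<alpha> = {(x, y). x \<in> X \<and> y \<in> \<Inter>{N\<in>\<alpha>. x \<in> N}}"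

end

theory Submission
  imports Defs
begin

text \<open>The coarsest quasi-uniformity inducing the quasi-proximity of \<open>\<V>\<close> is the one generated
  by the subbase of entourages \<open>X \<times> X - A \<times> B\<close>, one for each pair \<open>(A, B)\<close> that is far
  for \<open>\<V>\<close>: any quasi-uniformity with the same quasi-proximity contains these entourages, and
  conversely the generated one keeps near pairs near because, splitting \<open>A\<close> along \<open>A\<^sub>0\<close> and
  \<open>B\<close> along \<open>B\<^sub>0\<close>, a near pair always has a near piece avoiding \<open>A\<^sub>0 \<times> B\<^sub>0\<close>.
  For \<open>A \<in> \<alpha>\<close> the entourage \<open>U\<^sub>\<alpha>\<close> maps \<open>A\<close> into itself, so \<open>A\<close> is far from its complement;
  hence \<open>U_set X A = X \<times> X - A \<times> (X - A)\<close> belongs to \<open>\<V>\<^sub>\<omega>\<close>.\<close>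

lemma quasi_uniformityD:
  assumes "quasi_uniformity X \<U>"
  shows quasi_uniformity_nonempty: "\<U> \<noteq> {}"
    and quasi_uniformity_Id_on: "U \<in> \<U> \<Longrightarrow> Id_on X \<subseteq> U"
    and quasi_uniformity_subset: "U \<in> \<U> \<Longrightarrow> U \<subseteq> X \<times> X"
    and quasi_uniformity_upward: "U \<in> \<U> \<Longrightarrow> U \<subseteq> W \<Longrightarrow> W \<subseteq> X \<times> X \<Longrightarrow> W \<in> \<U>"
    and quasi_uniformity_Int: "U \<in> \<U> \<Longrightarrow> W \<in> \<U> \<Longrightarrow> U \<inter> W \<in> \<U>"
    and quasi_uniformity_half: "U \<in> \<U> \<Longrightarrow> \<exists>W\<in>\<U>. W O W \<subseteq> U"
  using assms unfolding quasi_uniformity_def by blast+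

lemma not_qprox_iff:
  assumes "A \<subseteq> X" "B \<subseteq> X"
  shows "(A, B) \<notin> qprox X \<U> \<longleftrightarrow> (\<exists>U\<in>\<U>. U `` A \<inter> B = {})"
  using assms by (auto simp: qprox_def)

lemma qprox_subset: "(A, B) \<in> qprox X \<U> \<Longrightarrow> A \<subseteq> X \<and> B \<subseteq> X"
  by (simp add: qprox_def)

lemma qprox_mono:
  assumes "(A', B') \<in> qprox X \<U>" "A' \<subseteq> A" "A \<subseteq> X" "B' \<subseteq> B" "B \<subseteq> X"
  shows "(A, B) \<in> qprox X \<U>"
  using assms unfolding qprox_def by blast

lemma qprox_Un_left:
  assumes "quasi_uniformity X \<U>" "(A\<^sub>1 \<union> A\<^sub>2, B) \<in> qprox X \<U>"
  shows "(A\<^sub>1, B) \<in> qprox X \<U> \<or> (A\<^sub>2, B) \<in> qprox X \<U>"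
proof (rule ccontr)
  assume "\<not> ?thesis"
  moreover have "A\<^sub>1 \<subseteq> X" "A\<^sub>2 \<subseteq> X" "B \<subseteq> X"
    using qprox_subset[OF assms(2)] by auto
  ultimately obtain U\<^sub>1 U\<^sub>2 where U: "U\<^sub>1 \<in> \<U>" "U\<^sub>1 `` A\<^sub>1 \<inter> B = {}" "U\<^sub>2 \<in> \<U>" "U\<^sub>2 `` A\<^sub>2 \<inter> B = {}"
    by (meson not_qprox_iff)
  have "U\<^sub>1 \<inter> U\<^sub>2 \<in> \<U>"
    using quasi_uniformity_Int[OF assms(1) U(1,3)] .
  moreover have "(U\<^sub>1 \<inter> U\<^sub>2) `` (A\<^sub>1 \<union> A\<^sub>2) \<inter> B = {}"
    using U(2,4) by blast
  ultimately show False
    using assms(2) by (auto simp: qprox_def)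
qed

lemma qprox_Un_right:
  assumes "quasi_uniformity X \<U>" "(A, B\<^sub>1 \<union> B\<^sub>2) \<in> qprox X \<U>"
  shows "(A, B\<^sub>1) \<in> qprox X \<U> \<or> (A, B\<^sub>2) \<in> qprox X \<U>"
proof (rule ccontr)
  assume "\<not> ?thesis"
  moreover have "A \<subseteq> X" "B\<^sub>1 \<subseteq> X" "B\<^sub>2 \<subseteq> X"
    using qprox_subset[OF assms(2)] by auto
  ultimately obtain U\<^sub>1 U\<^sub>2 where U: "U\<^sub>1 \<in> \<U>" "U\<^sub>1 `` A \<inter> B\<^sub>1 = {}" "U\<^sub>2 \<in> \<U>" "U\<^sub>2 `` A \<inter> B\<^sub>2 = {}"
    by (meson not_qprox_iff)
  have "U\<^sub>1 \<inter> U\<^sub>2 \<in> \<U>"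
    using quasi_uniformity_Int[OF assms(1) U(1,3)] .
  moreover have "(U\<^sub>1 \<inter> U\<^sub>2) `` A \<inter> (B\<^sub>1 \<union> B\<^sub>2) = {}"
    using U(2,4) by blast
  ultimately show False
    using assms(2) by (auto simp: qprox_def)
qed

lemma U_set_mem_iff_not_qprox:
  assumes "quasi_uniformity X \<U>" "N \<subseteq> X"
  shows "U_set X N \<in> \<U> \<longleftrightarrow> (N, X - N) \<notin> qprox X \<U>"
proof
  assume "U_set X N \<in> \<U>"
  moreover have "U_set X N `` N \<inter> (X - N) = {}"
    unfolding U_set_def by blast
  ultimately show "(N, X - N) \<notin> qprox X \<U>"
    using not_qprox_iff[OF assms(2), of "X - N"] by blast
next
  assume "(N, X - N) \<notin> qprox X \<U>"
  then obtain U where U: "U \<in> \<U>" "U `` N \<inter> (X - N) = {}"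
    using not_qprox_iff[OF assms(2), of "X - N"] by blast
  have "U \<subseteq> X \<times> X"
    using quasi_uniformity_subset[OF assms(1) U(1)] .
  with U(2) have "U \<subseteq> U_set X N"
    unfolding U_set_def by blast
  moreover have "U_set X N \<subseteq> X \<times> X"
    using assms(2) unfolding U_set_def by blast
  ultimately show "U_set X N \<in> \<U>"
    using quasi_uniformity_upward[OF assms(1) U(1)] by blast
qed

definition qu_generated :: "'a set \<Rightarrow> ('a \<times> 'a) set set \<Rightarrow> ('a \<times> 'a) set set" where
  "qu_generated X \<S> = {U. U \<subseteq> X \<times> X \<and> (\<exists>F. finite F \<and> F \<subseteq> \<S> \<and> (X \<times> X) \<inter> \<Inter>F \<subseteq> U)}"

lemma qu_generatedI:
  "U \<subseteq> X \<times> X \<Longrightarrow> finite F \<Longrightarrow> F \<subseteq> \<S> \<Longrightarrow> (X \<times> X) \<inter> \<Inter>F \<subseteq> U \<Longrightarrow> U \<in> qu_generated X \<S>"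
  unfolding qu_generated_def by blast

lemma qu_generatedE:
  assumes "U \<in> qu_generated X \<S>"
  obtains F where "finite F" "F \<subseteq> \<S>" "(X \<times> X) \<inter> \<Inter>F \<subseteq> U" "U \<subseteq> X \<times> X"
  using assms unfolding qu_generated_def by blast

lemma quasi_uniformity_qu_generated:
  assumes Id_on: "\<And>S. S \<in> \<S> \<Longrightarrow> Id_on X \<subseteq> S"
    and half: "\<And>S. S \<in> \<S> \<Longrightarrow> \<exists>F. finite F \<and> F \<subseteq> \<S> \<and> ((X \<times> X) \<inter> \<Inter>F) O ((X \<times> X) \<inter> \<Inter>F) \<subseteq> S"
  shows "quasi_uniformity X (qu_generated X \<S>)"
  unfolding quasi_uniformity_def
proof (intro conjI ballI allI impI)
  show "qu_generated X \<S> \<noteq> {}"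
    using qu_generatedI[of "X \<times> X" X "{}" \<S>] by blast
next
  fix U assume "U \<in> qu_generated X \<S>"
  then obtain F where "F \<subseteq> \<S>" "(X \<times> X) \<inter> \<Inter>F \<subseteq> U" "U \<subseteq> X \<times> X"
    by (rule qu_generatedE)
  moreover from this have "Id_on X \<subseteq> (X \<times> X) \<inter> \<Inter>F"
    using Id_on by blast
  ultimately show "Id_on X \<subseteq> U" "U \<subseteq> X \<times> X" by blast+
next
  fix U W assume "U \<in> qu_generated X \<S> \<and> U \<subseteq> W \<and> W \<subseteq> X \<times> X"
  then obtain F where "W \<subseteq> X \<times> X" "finite F" "F \<subseteq> \<S>" "(X \<times> X) \<inter> \<Inter>F \<subseteq> W"
    by (metis order_trans qu_generatedE)
  then show "W \<in> qu_generated X \<S>"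
    by (rule qu_generatedI)
next
  fix U W assume "U \<in> qu_generated X \<S>" "W \<in> qu_generated X \<S>"
  then obtain F G where "finite F" "F \<subseteq> \<S>" "(X \<times> X) \<inter> \<Inter>F \<subseteq> U" "U \<subseteq> X \<times> X"
    and "finite G" "G \<subseteq> \<S>" "(X \<times> X) \<inter> \<Inter>G \<subseteq> W"
    by (elim qu_generatedE)
  then show "U \<inter> W \<in> qu_generated X \<S>"
    by (intro qu_generatedI[of _ X "F \<union> G"]) auto
next
  fix U assume "U \<in> qu_generated X \<S>"
  then obtain F where F: "finite F" "F \<subseteq> \<S>" "(X \<times> X) \<inter> \<Inter>F \<subseteq> U"
    by (rule qu_generatedE)
  have "\<forall>S\<in>F. \<exists>G. finite G \<and> G \<subseteq> \<S> \<and> ((X \<times> X) \<inter> \<Inter>G) O ((X \<times> X) \<inter> \<Inter>G) \<subseteq> S"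
    using half F(2) by blast
  then obtain h where h: "\<And>S. S \<in> F \<Longrightarrow> finite (h S) \<and> h S \<subseteq> \<S> \<and>
      ((X \<times> X) \<inter> \<Inter>(h S)) O ((X \<times> X) \<inter> \<Inter>(h S)) \<subseteq> S"
    by metis
  define Q where "Q = (X \<times> X) \<inter> \<Inter>(\<Union>(h ` F))"
  have "Q \<in> qu_generated X \<S>"
    unfolding Q_def by (rule qu_generatedI[of _ X "\<Union>(h ` F)"]) (use F(1) h in auto)
  moreover have "Q O Q \<subseteq> S" if "S \<in> F" for S
  proof -
    have "Q \<subseteq> (X \<times> X) \<inter> \<Inter>(h S)"
      unfolding Q_def using that by blast
    then have "Q O Q \<subseteq> ((X \<times> X) \<inter> \<Inter>(h S)) O ((X \<times> X) \<inter> \<Inter>(h S))"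
      using relcomp_mono by blast
    then show ?thesis
      using h[OF that] by blast
  qed
  moreover have "Q O Q \<subseteq> X \<times> X"
    unfolding Q_def by blast
  ultimately have "Q O Q \<subseteq> (X \<times> X) \<inter> \<Inter>F"
    by blast
  with F(3) \<open>Q \<in> qu_generated X \<S>\<close> show "\<exists>Q\<in>qu_generated X \<S>. Q O Q \<subseteq> U"
    by blast
qed

lemma qu_generated_least:
  assumes "quasi_uniformity X \<U>" "\<S> \<subseteq> \<U>"
  shows "qu_generated X \<S> \<subseteq> \<U>"
proof
  have XX: "X \<times> X \<in> \<U>"
    using quasi_uniformity_nonempty[OF assms(1)] quasi_uniformity_upward[OF assms(1)]
      quasi_uniformity_subset[OF assms(1)] by blast
  have fin_Int: "(X \<times> X) \<inter> \<Inter>F \<in> \<U>" if "finite F" "F \<subseteq> \<S>" for F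
    using that
  proof (induction F rule: finite_induct)
    case (insert S F)
    then have "((X \<times> X) \<inter> \<Inter>F) \<inter> S \<in> \<U>"
      using assms(2) quasi_uniformity_Int[OF assms(1)] by blast
    then show ?case by (simp add: Int_ac)
  qed (simp add: XX)
  fix U assume "U \<in> qu_generated X \<S>"
  then show "U \<in> \<U>"
    by (metis qu_generatedE fin_Int quasi_uniformity_upward[OF assms(1)])
qed

definition far_entourages :: "'a set \<Rightarrow> ('a \<times> 'a) set set \<Rightarrow> ('a \<times> 'a) set set" where
  "far_entourages X \<U> = {X \<times> X - A \<times> B | A B. A \<subseteq> X \<and> B \<subseteq> X \<and> (A, B) \<notin> qprox X \<U>}"

lemma far_entourages_Id_on:
  assumes "quasi_uniformity X \<U>" "S \<in> far_entourages X \<U>"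
  shows "Id_on X \<subseteq> S"
proof -
  obtain A B where S: "S = X \<times> X - A \<times> B" "A \<subseteq> X" "B \<subseteq> X" "(A, B) \<notin> qprox X \<U>"
    using assms(2) unfolding far_entourages_def by blast
  then obtain U where "U \<in> \<U>" "U `` A \<inter> B = {}"
    by (auto simp: not_qprox_iff)
  with quasi_uniformity_Id_on[OF assms(1)] show ?thesis
    unfolding S(1) by blast
qed

text \<open>If \<open>W O W \<subseteq> U\<close> with \<open>U `` A \<inter> B = {}\<close>, then \<open>A\<close> is far from the complement of \<open>C = W `` A\<close>
  and \<open>C\<close> is far from \<open>B\<close>; the two corresponding entourages compose into \<open>X \<times> X - A \<times> B\<close>.\<close>

lemma far_entourages_half:
  assumes "quasi_uniformity X \<U>" "S \<in> far_entourages X \<U>"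
  shows "\<exists>F. finite F \<and> F \<subseteq> far_entourages X \<U> \<and> ((X \<times> X) \<inter> \<Inter>F) O ((X \<times> X) \<inter> \<Inter>F) \<subseteq> S"
proof -
  obtain A B where S: "S = X \<times> X - A \<times> B" "A \<subseteq> X" "B \<subseteq> X" "(A, B) \<notin> qprox X \<U>"
    using assms(2) unfolding far_entourages_def by blast
  then obtain U where U: "U \<in> \<U>" "U `` A \<inter> B = {}"
    by (auto simp: not_qprox_iff)
  obtain W where W: "W \<in> \<U>" "W O W \<subseteq> U"
    using quasi_uniformity_half[OF assms(1) U(1)] by blast
  define C where "C = W `` A"
  have C: "C \<subseteq> X"
    using quasi_uniformity_subset[OF assms(1) W(1)] unfolding C_def by blast
  have "(A, X - C) \<notin> qprox X \<U>"
    using W(1) S(2) unfolding C_def by (auto simp: not_qprox_iff)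
  moreover have "W `` C \<inter> B = {}"
    using W(2) U(2) unfolding C_def by blast
  then have "(C, B) \<notin> qprox X \<U>"
    using W(1) not_qprox_iff[OF C S(3)] by blast
  ultimately have "{X \<times> X - A \<times> (X - C), X \<times> X - C \<times> B} \<subseteq> far_entourages X \<U>"
    using S(2,3) C unfolding far_entourages_def by blast
  moreover have "((X \<times> X) \<inter> \<Inter>{X \<times> X - A \<times> (X - C), X \<times> X - C \<times> B})
      O ((X \<times> X) \<inter> \<Inter>{X \<times> X - A \<times> (X - C), X \<times> X - C \<times> B}) \<subseteq> S"
    unfolding S(1) by blast
  ultimately show ?thesis
    by (intro exI[of _ "{X \<times> X - A \<times> (X - C), X \<times> X - C \<times> B}"]) simp
qed

lemma quasi_uniformity_far_entourages:
  "quasi_uniformity X \<U> \<Longrightarrow> quasi_uniformity X (qu_generated X (far_entourages X \<U>))"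
  by (intro quasi_uniformity_qu_generated far_entourages_Id_on far_entourages_half)

lemma qprox_meets_far_entourages:
  assumes "quasi_uniformity X \<U>" "finite F" "F \<subseteq> far_entourages X \<U>" "(A, B) \<in> qprox X \<U>"
  shows "\<exists>x\<in>A. \<exists>y\<in>B. (x, y) \<in> (X \<times> X) \<inter> \<Inter>F"
  using assms(2-4)
proof (induction F arbitrary: A B rule: finite_induct)
  case empty
  obtain U where U: "U \<in> \<U>"
    using quasi_uniformity_nonempty[OF assms(1)] by blast
  then have "U `` A \<inter> B \<noteq> {}"
    using empty.prems(2) by (simp add: qprox_def)
  then show ?case
    using quasi_uniformity_subset[OF assms(1) U] by blast
next
  case (insert S F)
  obtain A\<^sub>0 B\<^sub>0 where S: "S = X \<times> X - A\<^sub>0 \<times> B\<^sub>0" "A\<^sub>0 \<subseteq> X" "B\<^sub>0 \<subseteq> X" "(A\<^sub>0, B\<^sub>0) \<notin> qprox X \<U>"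
    using insert.prems(1) unfolding far_entourages_def by auto
  have near_F: "\<exists>x\<in>A'. \<exists>y\<in>B'. (x, y) \<in> (X \<times> X) \<inter> \<Inter>F" if "(A', B') \<in> qprox X \<U>" for A' B'
    using insert.IH insert.prems(1) that by blast
  have "(A - A\<^sub>0, B) \<in> qprox X \<U> \<or> (A \<inter> A\<^sub>0, B) \<in> qprox X \<U>"
    using qprox_Un_left[OF assms(1), of "A - A\<^sub>0" "A \<inter> A\<^sub>0" B] insert.prems(2)
    by (simp add: Un_Diff_Int)
  moreover have "(A \<inter> A\<^sub>0, B - B\<^sub>0) \<in> qprox X \<U> \<or> (A \<inter> A\<^sub>0, B \<inter> B\<^sub>0) \<in> qprox X \<U>"
    if "(A \<inter> A\<^sub>0, B) \<in> qprox X \<U>"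
    using qprox_Un_right[OF assms(1), of "A \<inter> A\<^sub>0" "B - B\<^sub>0" "B \<inter> B\<^sub>0"] that
    by (simp add: Un_Diff_Int)
  moreover have "(A \<inter> A\<^sub>0, B \<inter> B\<^sub>0) \<notin> qprox X \<U>"
    using S(2-4) qprox_mono[of "A \<inter> A\<^sub>0" "B \<inter> B\<^sub>0" X \<U> A\<^sub>0 B\<^sub>0] by blast
  ultimately consider "(A - A\<^sub>0, B) \<in> qprox X \<U>" | "(A \<inter> A\<^sub>0, B - B\<^sub>0) \<in> qprox X \<U>"
    by blast
  then show ?case
  proof cases
    case 1
    then obtain x y where "x \<in> A - A\<^sub>0" "y \<in> B" "(x, y) \<in> (X \<times> X) \<inter> \<Inter>F"
      using near_F by blast
    then show ?thesis
      using S(1) by blast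
  next
    case 2
    then obtain x y where "x \<in> A \<inter> A\<^sub>0" "y \<in> B - B\<^sub>0" "(x, y) \<in> (X \<times> X) \<inter> \<Inter>F"
      using near_F by blast
    then show ?thesis
      using S(1) by blast
  qed
qed

lemma qprox_far_entourages:
  assumes "quasi_uniformity X \<U>"
  shows "qprox X (qu_generated X (far_entourages X \<U>)) = qprox X \<U>"
proof (intro set_eqI iffI; clarify)
  fix A B assume near: "(A, B) \<in> qprox X (qu_generated X (far_entourages X \<U>))"
  have sub: "A \<subseteq> X" "B \<subseteq> X"
    using qprox_subset[OF near] by auto
  show "(A, B) \<in> qprox X \<U>"
  proof (rule ccontr)
    assume "(A, B) \<notin> qprox X \<U>"
    then have "X \<times> X - A \<times> B \<in> far_entourages X \<U>"
      using sub unfolding far_entourages_def by blast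
    then have "X \<times> X - A \<times> B \<in> qu_generated X (far_entourages X \<U>)"
      by (intro qu_generatedI[of _ X "{X \<times> X - A \<times> B}"]) auto
    moreover have "(X \<times> X - A \<times> B) `` A \<inter> B = {}"
      by blast
    ultimately show False
      using near not_qprox_iff[OF sub] by blast
  qed
next
  fix A B assume near: "(A, B) \<in> qprox X \<U>"
  have "U `` A \<inter> B \<noteq> {}" if U: "U \<in> qu_generated X (far_entourages X \<U>)" for U
  proof -
    obtain F where "finite F" "F \<subseteq> far_entourages X \<U>" "(X \<times> X) \<inter> \<Inter>F \<subseteq> U"
      using U by (rule qu_generatedE)
    moreover from this obtain x y where "x \<in> A" "y \<in> B" "(x, y) \<in> (X \<times> X) \<inter> \<Inter>F"
      using qprox_meets_far_entourages[OF assms _ _ near] by blast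
    ultimately show ?thesis
      by blast
  qed
  then show "(A, B) \<in> qprox X (qu_generated X (far_entourages X \<U>))"
    using qprox_subset[OF near] by (simp add: qprox_def)
qed

lemma far_entourages_subset:
  assumes "quasi_uniformity X \<W>" "qprox X \<W> = qprox X \<U>"
  shows "far_entourages X \<U> \<subseteq> \<W>"
proof
  fix S assume "S \<in> far_entourages X \<U>"
  then obtain A B where S: "S = X \<times> X - A \<times> B" "A \<subseteq> X" "B \<subseteq> X" "(A, B) \<notin> qprox X \<W>"
    using assms(2) unfolding far_entourages_def by blast
  then obtain U where U: "U \<in> \<W>" "U `` A \<inter> B = {}"
    by (auto simp: not_qprox_iff)
  then have "U \<subseteq> S"
    using quasi_uniformity_subset[OF assms(1) U(1)] unfolding S(1) by blast
  then show "S \<in> \<W>"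
    using quasi_uniformity_upward[OF assms(1) U(1)] unfolding S(1) by blast
qed

lemma V_omega_eq_qu_generated:
  assumes "quasi_uniformity X \<U>"
  shows "V_omega X \<U> = qu_generated X (far_entourages X \<U>)"
proof -
  let ?\<C> = "qu_generated X (far_entourages X \<U>)"
  let ?coarsest = "\<lambda>\<W>. quasi_uniformity X \<W> \<and> qprox X \<W> = qprox X \<U> \<and>
      (\<forall>\<W>'. quasi_uniformity X \<W>' \<and> qprox X \<W>' = qprox X \<U> \<longrightarrow> \<W> \<subseteq> \<W>')"
  have \<C>: "quasi_uniformity X ?\<C>" "qprox X ?\<C> = qprox X \<U>"
    using quasi_uniformity_far_entourages qprox_far_entourages assms by blast+
  have least: "?\<C> \<subseteq> \<W>" if "quasi_uniformity X \<W>" "qprox X \<W> = qprox X \<U>" for \<W>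
    using qu_generated_least far_entourages_subset that by blast
  have "?coarsest ?\<C>"
    using \<C> least by blast
  moreover have "\<W> = ?\<C>" if "?coarsest \<W>" for \<W>
    using that \<C> least by blast
  ultimately show ?thesis
    unfolding V_omega_def by (rule the_equality)
qed

lemma
  assumes "quasi_uniformity X \<U>"
  shows quasi_uniformity_V_omega: "quasi_uniformity X (V_omega X \<U>)"
    and qprox_V_omega: "qprox X (V_omega X \<U>) = qprox X \<U>"
  using quasi_uniformity_far_entourages[OF assms] qprox_far_entourages[OF assms]
  by (simp_all add: V_omega_eq_qu_generated[OF assms])

theorem corollary2p3:
  fixes \<tau> :: "'a topology" and \<V> :: "('a \<times> 'a) set set" and \<alpha> :: "'a set set"
  assumes "\<V> \<in> T_qu \<tau>"
    and "interior_preserving_open_cover \<tau> \<alpha>"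
    and "U_cover (topspace \<tau>) \<alpha> \<in> \<V>"
    and "A \<in> \<alpha>"
  shows "A \<in> B_qu \<tau> (V_omega (topspace \<tau>) \<V>)"
proof -
  let ?X = "topspace \<tau>"
  have qu: "quasi_uniformity ?X \<V>"
    using assms(1) by (simp add: T_qu_def compatible_qu_def)
  have "openin \<tau> A"
    using assms(2,4) by (simp add: interior_preserving_open_cover_def)
  then have A: "A \<subseteq> ?X"
    by (rule openin_subset)
  have "U_cover ?X \<alpha> `` A \<inter> (?X - A) = {}"
    using assms(4) unfolding U_cover_def by blast
  then have "(A, ?X - A) \<notin> qprox ?X (V_omega ?X \<V>)"
    using assms(3) A by (auto simp: qprox_V_omega[OF qu] not_qprox_iff)
  then have "U_set ?X A \<in> V_omega ?X \<V>"
    using U_set_mem_iff_not_qprox[OF quasi_uniformity_V_omega[OF qu] A] by blast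
  with \<open>openin \<tau> A\<close> show ?thesis
    by (simp add: B_qu_def)
qed

end
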